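(* Let $\mathbb{K}$ be an infinite field, $n\in\mathbb{N}$, and $G\subseteq\mathrm{GL}_n(\mathbb{K})$ a subgroup endowed with a topology making it a topological group. If $G$ has an open subgroup which is soluble (resp. nilpotent), then $G$ has an open normal subgroup which is soluble (resp. nilpotent). *)

theory Defs
  imports "HOL-Analysis.Analysis" "HOL-Algebra.Solvable_Groups"
begin

text \<open>The general linear group GL_n(K) as a HOL-Algebra group; n = CARD('n).\<close>
definition GL :: "('a::field ^ 'n ^ 'n) monoid" where
  "GL = \<lparr> carrier = {A. invertible A}, mult = (**), one = mat 1 \<rparr>"

fun lower_central :: "('g, 'b) monoid_scheme \<Rightarrow> nat \<Rightarrow> 'g set" where
  "lower_central G 0 = carrier G"
| "lower_central G (Suc k) =
     generate G (\<Union>x \<in> carrier G. \<Union>y \<in> lower_central G k.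
        {x \<otimes>\<^bsub>G\<^esub> y \<otimes>\<^bsub>G\<^esub> inv\<^bsub>G\<^esub> x \<otimes>\<^bsub>G\<^esub> inv\<^bsub>G\<^esub> y})"

definition nilpotent_group :: "('g, 'b) monoid_scheme \<Rightarrow> bool" where
  "nilpotent_group G \<longleftrightarrow> group G \<and> (\<exists>k. lower_central G k = {\<one>\<^bsub>G\<^esub>})"

definition topological_group_on :: "'g topology \<Rightarrow> ('g, 'b) monoid_scheme \<Rightarrow> bool" where
  "topological_group_on T G \<longleftrightarrow> group G \<and> topspace T = carrier G \<and>
     continuous_map (prod_topology T T) T (\<lambda>(x, y). x \<otimes>\<^bsub>G\<^esub> y) \<and>
     continuous_map T T (\<lambda>x. inv\<^bsub>G\<^esub> x)"

end

theory Submission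
  imports Defs "HOL-Library.Function_Algebras"
begin

text \<open>
  Replace the open soluble (nilpotent) subgroup H by a Zariski-type closure C of H inside GL_n,
  taken with respect to polynomials of bounded degree in the entries of x and x\<inverse>.
  Commutators are polynomial maps of degree 2, so the derived (lower central) series of the
  closure of degree 2^k D stays inside the closure of degree D of the corresponding term for H;
  hence C is again soluble (nilpotent). The polynomials of degree at most D form a finite
  dimensional space, so the closed sets of degree D satisfy the descending chain condition and
  the normal core N of C in G is already cut out by finitely many conjugates of C. Thus N
  contains a finite intersection of conjugates of the open subgroup H, so N is open.
\<close>

section \<open>Groups and topological groups\<close>

definition normal_core :: "('g, 'b) monoid_scheme \<Rightarrow> 'g set \<Rightarrow> 'g set" where
  "normal_core G C = {x \<in> carrier G. \<forall>g \<in> carrier G. inv\<^bsub>G\<^esub> g \<otimes>\<^bsub>G\<^esub> x \<otimes>\<^bsub>G\<^esub> g \<in> C}"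

lemma (in group) normal_core_subset: "normal_core G C \<subseteq> C"
proof
  fix x assume "x \<in> normal_core G C"
  then have "x \<in> carrier G" "inv \<one> \<otimes> x \<otimes> \<one> \<in> C" unfolding normal_core_def by auto
  then show "x \<in> C" by simp
qed

lemma (in group) normal_core_normal:
  assumes C: "subgroup C G"
  shows "normal_core G C \<lhd> G"
proof -
  have sub: "subgroup (normal_core G C) G"
  proof (rule subgroupI)
    show "normal_core G C \<subseteq> carrier G" by (auto simp: normal_core_def)
    show "normal_core G C \<noteq> {}"
      using subgroup.one_closed[OF C] by (auto simp: normal_core_def)
  next
    fix a assume a: "a \<in> normal_core G C"
    have "inv g \<otimes> inv a \<otimes> g = inv (inv g \<otimes> a \<otimes> g)" if "g \<in> carrier G" for g
      using a that by (simp add: normal_core_def inv_mult_group m_assoc)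
    then show "inv a \<in> normal_core G C"
      using a subgroup.m_inv_closed[OF C] by (auto simp: normal_core_def)
  next
    fix a b assume a: "a \<in> normal_core G C" and b: "b \<in> normal_core G C"
    have "inv g \<otimes> (a \<otimes> b) \<otimes> g = (inv g \<otimes> a \<otimes> g) \<otimes> (inv g \<otimes> b \<otimes> g)" if "g \<in> carrier G" for g
      using a b that by (simp add: normal_core_def m_assoc) (simp add: m_assoc[symmetric])
    then show "a \<otimes> b \<in> normal_core G C"
      using a b subgroup.m_closed[OF C] by (auto simp: normal_core_def)
  qed
  show ?thesis
  proof (rule normal_invI[OF sub])
    fix x h assume x: "x \<in> carrier G" and h: "h \<in> normal_core G C"
    have "inv g \<otimes> (x \<otimes> h \<otimes> inv x) \<otimes> g = inv (inv x \<otimes> g) \<otimes> h \<otimes> (inv x \<otimes> g)"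
      if "g \<in> carrier G" for g
      using x h that by (simp add: normal_core_def inv_mult_group m_assoc)
    then show "x \<otimes> h \<otimes> inv x \<in> normal_core G C"
      using x h by (auto simp: normal_core_def)
  qed
qed

lemma topological_group_on_continuous_translation:
  assumes T: "topological_group_on T G" and a: "a \<in> carrier G" and b: "b \<in> carrier G"
  shows "continuous_map T T (\<lambda>x. a \<otimes>\<^bsub>G\<^esub> x \<otimes>\<^bsub>G\<^esub> b)"
proof -
  have tG: "topspace T = carrier G"
    and mult: "continuous_map (prod_topology T T) T (\<lambda>(x, y). x \<otimes>\<^bsub>G\<^esub> y)"
    using T by (simp_all add: topological_group_on_def)
  have mult': "continuous_map T T (\<lambda>x. f x \<otimes>\<^bsub>G\<^esub> g x)"
    if "continuous_map T T f" "continuous_map T T g" for f g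
    using continuous_map_compose[OF continuous_map_pairedI[OF that] mult] by (simp add: comp_def)
  show ?thesis
    using a b tG by (intro mult' continuous_map_id[unfolded id_def]) auto
qed

lemma topological_group_on_openin_conjugates_Inter:
  assumes T: "topological_group_on T G" and H: "openin T H" and "finite F" "F \<subseteq> carrier G"
  shows "openin T {x \<in> carrier G. \<forall>g \<in> F. inv\<^bsub>G\<^esub> g \<otimes>\<^bsub>G\<^esub> x \<otimes>\<^bsub>G\<^esub> g \<in> H}"
  using \<open>finite F\<close> \<open>F \<subseteq> carrier G\<close>
proof (induction F rule: finite_induct)
  case empty
  then show ?case using T openin_topspace[of T] by (simp add: topological_group_on_def)
next
  case (insert g F)
  have "group G" using T by (simp add: topological_group_on_def)
  then have "openin T {x \<in> topspace T. inv\<^bsub>G\<^esub> g \<otimes>\<^bsub>G\<^esub> x \<otimes>\<^bsub>G\<^esub> g \<in> H}"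
    using openin_continuous_map_preimage[OF topological_group_on_continuous_translation[OF T] H]
      insert.prems by simp
  then have "openin T ({x \<in> carrier G. \<forall>g \<in> F. inv\<^bsub>G\<^esub> g \<otimes>\<^bsub>G\<^esub> x \<otimes>\<^bsub>G\<^esub> g \<in> H} \<inter>
                       {x \<in> topspace T. inv\<^bsub>G\<^esub> g \<otimes>\<^bsub>G\<^esub> x \<otimes>\<^bsub>G\<^esub> g \<in> H})"
    using insert by blast
  moreover have "topspace T = carrier G" using T by (simp add: topological_group_on_def)
  ultimately show ?case by (simp add: Collect_conj_eq[symmetric] conj_commute conj_left_commute)
qed

lemma topological_group_on_openin_subgroup:
  fixes G (structure)
  assumes T: "topological_group_on T G" and N: "subgroup N G"
    and U: "openin T U" "\<one>\<^bsub>G\<^esub> \<in> U" "U \<subseteq> N"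
  shows "openin T N"
proof -
  interpret group G using T by (simp add: topological_group_on_def)
  have tG: "topspace T = carrier G" using T by (simp add: topological_group_on_def)
  have NG: "N \<subseteq> carrier G" by (rule subgroup.subset[OF N])
  have eq: "N = (\<Union>n \<in> N. {x \<in> topspace T. inv n \<otimes> x \<otimes> \<one> \<in> U})"
  proof (intro equalityI subsetI)
    fix x assume "x \<in> N"
    then show "x \<in> (\<Union>n \<in> N. {x \<in> topspace T. inv n \<otimes> x \<otimes> \<one> \<in> U})"
      using U(2) NG tG by (intro UN_I[of x]) auto
  next
    fix x assume "x \<in> (\<Union>n \<in> N. {x \<in> topspace T. inv n \<otimes> x \<otimes> \<one> \<in> U})"
    then obtain n where n: "n \<in> N" "x \<in> carrier G" "inv n \<otimes> x \<otimes> \<one> \<in> U" using tG by auto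
    then have "inv n \<otimes> x \<in> N" using U(3) NG by (auto simp: subset_iff)
    then have "n \<otimes> (inv n \<otimes> x) \<in> N" using n(1) subgroup.m_closed[OF N] by blast
    then show "x \<in> N" using n NG by (simp add: m_assoc[symmetric] subsetD)
  qed
  have "openin T {x \<in> topspace T. inv n \<otimes> x \<otimes> \<one> \<in> U}" if "n \<in> N" for n
    using openin_continuous_map_preimage[OF topological_group_on_continuous_translation[OF T] U(1)]
      that NG by blast
  then have "openin T (\<Union>n \<in> N. {x \<in> topspace T. inv n \<otimes> x \<otimes> \<one> \<in> U})"
    by (intro openin_Union) blast
  then show ?thesis by (simp only: eq[symmetric])
qed

section \<open>The group GL_n\<close>

lemma matrix_inv_cancel:
  fixes A :: "'a::field^'n^'n"
  assumes "invertible A"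
  shows "A ** matrix_inv A = mat 1" "matrix_inv A ** A = mat 1"
proof -
  have "\<exists>A'. A ** A' = mat 1 \<and> A' ** A = mat 1" using assms by (simp add: invertible_def)
  then have "A ** matrix_inv A = mat 1 \<and> matrix_inv A ** A = mat 1"
    unfolding matrix_inv_def by (rule someI_ex)
  then show "A ** matrix_inv A = mat 1" "matrix_inv A ** A = mat 1" by auto
qed

lemma invertible_matrix_inv: "invertible (x::'a::field^'n^'n) \<Longrightarrow> invertible (matrix_inv x)"
  using matrix_inv_cancel unfolding invertible_def by blast

lemma invertible_mat_1: "invertible (mat 1 :: 'a::field^'n^'n)"
  unfolding invertible_def by (intro exI[of _ "mat 1"]) simp

lemma GL_carrier [simp]: "carrier GL = Collect invertible"
  and GL_mult [simp]: "mult GL = (**)"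
  and GL_one [simp]: "one GL = mat 1"
  by (simp_all add: GL_def)

lemma group_GL: "group (GL :: ('a::field^'n^'n) monoid)"
proof (rule groupI)
  fix x :: "'a^'n^'n" assume "x \<in> carrier GL"
  then show "\<exists>y \<in> carrier GL. y \<otimes>\<^bsub>GL\<^esub> x = \<one>\<^bsub>GL\<^esub>"
    by (intro bexI[of _ "matrix_inv x"]) (auto simp: matrix_inv_cancel invertible_matrix_inv)
qed (auto simp: invertible_mult invertible_mat_1 matrix_mul_assoc)

lemma GL_inv: "invertible (x::'a::field^'n^'n) \<Longrightarrow> inv\<^bsub>GL\<^esub> x = matrix_inv x"
  using group.inv_equality[OF group_GL, of "matrix_inv x" x]
  by (simp add: matrix_inv_cancel invertible_matrix_inv)

lemma matrix_inv_matrix_inv: "invertible (x::'a::field^'n^'n) \<Longrightarrow> matrix_inv (matrix_inv x) = x"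
  using group.inv_inv[OF group_GL, of x] by (simp add: GL_inv invertible_matrix_inv)

lemma matrix_inv_mult:
  fixes x y :: "'a::field^'n^'n"
  shows "invertible x \<Longrightarrow> invertible y \<Longrightarrow> matrix_inv (x ** y) = matrix_inv y ** matrix_inv x"
  using group.inv_mult_group[OF group_GL, of x y] by (simp add: GL_inv invertible_mult)

lemma subgroup_GL_invertible: "subgroup S (GL :: ('a::field^'n^'n) monoid) \<Longrightarrow> S \<subseteq> Collect invertible"
  using subgroup.subset by fastforce

lemma subgroup_GL_inv_eq:
  assumes "subgroup S (GL :: ('a::field^'n^'n) monoid)" "x \<in> S"
  shows "inv\<^bsub>GL\<lparr>carrier := S\<rparr>\<^esub> x = matrix_inv x"
proof -
  have "invertible x" using subgroup_GL_invertible assms by blast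
  then show ?thesis using group.m_inv_consistent[OF group_GL assms] by (simp add: GL_inv)
qed

lemma subgroup_GL_matrix_inv:
  "subgroup S (GL :: ('a::field^'n^'n) monoid) \<Longrightarrow> x \<in> S \<Longrightarrow> matrix_inv x \<in> S"
  using subgroup.m_inv_closed GL_inv subgroup_GL_invertible by fastforce

lemma subgroup_GL_mult: "subgroup S (GL :: ('a::field^'n^'n) monoid) \<Longrightarrow> a \<in> S \<Longrightarrow> b \<in> S \<Longrightarrow> a ** b \<in> S"
  using subgroup.m_closed by fastforce

lemma subgroup_GL_one: "subgroup S (GL :: ('a::field^'n^'n) monoid) \<Longrightarrow> mat 1 \<in> S"
  using subgroup.one_closed by fastforce

definition commutator :: "'a::field^'n^'n \<Rightarrow> 'a^'n^'n \<Rightarrow> 'a^'n^'n" where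
  "commutator x y = x ** y ** matrix_inv x ** matrix_inv y"

lemma commutator_GL:
  "invertible x \<Longrightarrow> invertible y \<Longrightarrow>
     x \<otimes>\<^bsub>GL\<^esub> y \<otimes>\<^bsub>GL\<^esub> inv\<^bsub>GL\<^esub> x \<otimes>\<^bsub>GL\<^esub> inv\<^bsub>GL\<^esub> y = commutator x y"
  by (simp add: commutator_def GL_inv)

lemma invertible_commutator: "invertible x \<Longrightarrow> invertible y \<Longrightarrow> invertible (commutator x y)"
  unfolding commutator_def by (intro invertible_mult invertible_matrix_inv)

lemma matrix_inv_commutator:
  "invertible x \<Longrightarrow> invertible y \<Longrightarrow> matrix_inv (commutator x y) = commutator y x"
  unfolding commutator_def
  by (simp add: matrix_inv_mult invertible_mult invertible_matrix_inv matrix_inv_matrix_inv matrix_mul_assoc)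

lemma subgroup_GL_commutator:
  "subgroup X (GL :: ('a::field^'n^'n) monoid) \<Longrightarrow> x \<in> X \<Longrightarrow> y \<in> X \<Longrightarrow> commutator x y \<in> X"
  unfolding commutator_def by (intro subgroup_GL_mult subgroup_GL_matrix_inv) auto

section \<open>Polynomial functions on GL_n\<close>

lemma (in vector_space) subspace_eq_if_dim_le:
  assumes "subspace U" "subspace V" "U \<subseteq> V" "V \<subseteq> span W" "finite W" "dim V \<le> dim U"
  shows "V = U"
proof (rule ccontr)
  assume "V \<noteq> U"
  then obtain v where v: "v \<in> V" "v \<notin> U" using assms(3) by blast
  obtain B where B: "B \<subseteq> U" "independent B" "U \<subseteq> span B" "card B = dim U"
    by (rule basis_exists)
  have "span B \<subseteq> U" using B(1) assms(1) by (rule span_minimal)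
  then have ind: "independent (insert v B)" using v B(2) by (intro independent_insertI) auto
  have "insert v B \<subseteq> V" using v(1) B(1) assms(3) by blast
  then obtain B' where B': "insert v B \<subseteq> B'" "B' \<subseteq> V" "independent B'" "V \<subseteq> span B'"
    using ind by (rule maximal_independent_subset_extend)
  have "B' \<subseteq> span W" using B'(2) assms(4) by (rule order_trans)
  then have fin: "finite B'" using independent_span_bound[OF assms(5) B'(3)] by simp
  have "finite B" using B'(1) fin by (meson finite_subset subset_insertI2 subset_refl)
  moreover have "v \<notin> B" using v(2) B(1) by blast
  ultimately have "card (insert v B) = Suc (card B)" by simp
  moreover have "card (insert v B) \<le> card B'" by (rule card_mono[OF fin B'(1)])
  ultimately show False using basis_card_eq_dim[OF B'(2,4,3)] B(4) assms(6) by simp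
qed

interpretation fun_space: vector_space "(\<lambda>c f x. c * f x) :: 'a::field \<Rightarrow> ('x \<Rightarrow> 'a) \<Rightarrow> 'x \<Rightarrow> 'a"
  by unfold_locales (auto simp: fun_eq_iff algebra_simps)

text \<open>
  GL_n is the affine variety of pairs (x, x\<inverse>); its coordinates are indexed by (i, j, b), the flag b
  selecting an entry of x\<inverse> rather than of x. Polynomials in these coordinates are the regular
  functions on GL_n, and they are graded by the length of the monomials involved.
\<close>
definition coord :: "'n::finite \<times> 'n \<times> bool \<Rightarrow> 'a::field^'n^'n \<Rightarrow> 'a" where
  "coord c x = (case c of (i, j, b) \<Rightarrow> (if b then matrix_inv x else x) $ i $ j)"

definition coord_monomial :: "('n::finite \<times> 'n \<times> bool) list \<Rightarrow> 'a::field^'n^'n \<Rightarrow> 'a" where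
  "coord_monomial cs x = prod_list (map (\<lambda>c. coord c x) cs)"

definition coord_monomials :: "nat \<Rightarrow> ('a::field^'n^'n \<Rightarrow> 'a) set" where
  "coord_monomials D = coord_monomial ` {cs. length cs \<le> D}"

definition poly_fun :: "nat \<Rightarrow> ('a::field^'n::finite^'n \<Rightarrow> 'a) set" where
  "poly_fun D = fun_space.span (coord_monomials D)"

lemma coord_entry: "coord (i, j, False) = (\<lambda>x. x $ i $ j)"
  and coord_inverse_entry: "coord (i, j, True) = (\<lambda>x. matrix_inv x $ i $ j)"
  by (simp_all add: coord_def fun_eq_iff)

lemma coord_monomial_Nil: "coord_monomial [] = (\<lambda>x. 1)"
  and coord_monomial_append: "coord_monomial (cs @ ds) = (\<lambda>x. coord_monomial cs x * coord_monomial ds x)"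
  by (simp_all add: coord_monomial_def fun_eq_iff)

lemma coord_monomial_single: "coord_monomial [c] = coord c"
  by (simp add: coord_monomial_def fun_eq_iff)

lemma finite_coord_monomials: "finite (coord_monomials D :: ('a::field^'n^'n \<Rightarrow> 'a) set)"
  unfolding coord_monomials_def
  using finite_lists_length_le[of "UNIV :: ('n \<times> 'n \<times> bool) set" D] by simp

lemma coord_monomial_poly_fun: "length cs \<le> D \<Longrightarrow> coord_monomial cs \<in> poly_fun D"
  unfolding poly_fun_def coord_monomials_def by (intro fun_space.span_base) simp

lemma poly_fun_subspace: "fun_space.subspace (poly_fun D)"
  unfolding poly_fun_def by simp

lemma poly_fun_mono: "D \<le> D' \<Longrightarrow> poly_fun D \<subseteq> poly_fun D'"
  unfolding poly_fun_def coord_monomials_def by (rule fun_space.span_mono) auto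

lemma poly_fun_zero: "(\<lambda>x. 0) \<in> poly_fun D"
  using fun_space.span_zero by (simp add: poly_fun_def zero_fun_def)

lemma poly_fun_add: "f \<in> poly_fun D \<Longrightarrow> g \<in> poly_fun D \<Longrightarrow> (\<lambda>x. f x + g x) \<in> poly_fun D"
  using fun_space.span_add by (simp add: poly_fun_def plus_fun_def)

lemma poly_fun_scale: "f \<in> poly_fun D \<Longrightarrow> (\<lambda>x. c * f x) \<in> poly_fun D"
  using fun_space.span_scale by (simp add: poly_fun_def)

lemma poly_fun_diff: "f \<in> poly_fun D \<Longrightarrow> g \<in> poly_fun D \<Longrightarrow> (\<lambda>x. f x - g x) \<in> poly_fun D"
  using poly_fun_add[of f D "\<lambda>x. (-1) * g x"] poly_fun_scale[of g D "-1"] by simp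

lemma poly_fun_sum:
  "finite A \<Longrightarrow> (\<And>i. i \<in> A \<Longrightarrow> f i \<in> poly_fun D) \<Longrightarrow> (\<lambda>x. \<Sum>i \<in> A. f i x) \<in> poly_fun D"
  by (induction A rule: finite_induct) (auto intro: poly_fun_add poly_fun_zero)

lemma poly_fun_const: "(\<lambda>x. c) \<in> poly_fun D"
  using poly_fun_scale[OF coord_monomial_poly_fun[of "[]" D], of c] by (simp add: coord_monomial_Nil)

lemma poly_fun_coord: "coord c \<in> poly_fun 1"
  using coord_monomial_poly_fun[of "[c]" 1] by (simp add: coord_monomial_single)

lemma poly_fun_span_induct:
  assumes "f \<in> poly_fun D" "fun_space.subspace P" "\<And>cs. length cs \<le> D \<Longrightarrow> coord_monomial cs \<in> P"
  shows "f \<in> P"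
  using fun_space.span_minimal[of "coord_monomials D" P] assms
  by (auto simp: poly_fun_def coord_monomials_def)

lemma subspace_poly_fun_multiplier: "fun_space.subspace {f. (\<lambda>x. h x * f x) \<in> poly_fun D}"
  using poly_fun_zero poly_fun_add poly_fun_scale
  by (intro fun_space.subspaceI) (auto simp: algebra_simps plus_fun_def zero_fun_def)

lemma poly_fun_mult:
  assumes f: "f \<in> poly_fun a" and g: "g \<in> poly_fun b"
  shows "(\<lambda>x. f x * g x) \<in> poly_fun (a + b)"
proof -
  have "(\<lambda>x. coord_monomial cs x * g x) \<in> poly_fun (a + b)" if "length cs \<le> a" for cs
  proof (rule poly_fun_span_induct[OF g subspace_poly_fun_multiplier, simplified])
    fix ds :: "('b \<times> 'b \<times> bool) list" assume "length ds \<le> b"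
    then show "(\<lambda>x. coord_monomial cs x * coord_monomial ds x) \<in> poly_fun (a + b)"
      using coord_monomial_poly_fun[of "cs @ ds" "a + b"] that by (simp add: coord_monomial_append)
  qed
  then show ?thesis
    using poly_fun_span_induct[OF f subspace_poly_fun_multiplier[of g]] by (simp add: mult.commute)
qed

definition poly_matrix_map :: "nat \<Rightarrow> ('a::field^'n^'n \<Rightarrow> 'a^'n^'n) \<Rightarrow> bool" where
  "poly_matrix_map k A \<longleftrightarrow> (\<forall>i j. (\<lambda>x. A x $ i $ j) \<in> poly_fun k)"

lemma poly_matrix_map_const: "poly_matrix_map k (\<lambda>x. C)"
  unfolding poly_matrix_map_def by (simp add: poly_fun_const)

lemma poly_matrix_map_id: "poly_matrix_map 1 (\<lambda>x. x)"
  unfolding poly_matrix_map_def coord_entry[symmetric] using poly_fun_coord by blast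

lemma poly_matrix_map_matrix_inv: "poly_matrix_map 1 matrix_inv"
  unfolding poly_matrix_map_def coord_inverse_entry[symmetric] using poly_fun_coord by blast

lemma poly_matrix_map_mult:
  "poly_matrix_map a A \<Longrightarrow> poly_matrix_map b B \<Longrightarrow> poly_matrix_map (a + b) (\<lambda>x. A x ** B x)"
  unfolding poly_matrix_map_def matrix_matrix_mult_def by (auto intro!: poly_fun_sum poly_fun_mult)

definition regular_map :: "nat \<Rightarrow> ('a::field^'n^'n \<Rightarrow> 'a^'n^'n) \<Rightarrow> bool" where
  "regular_map k \<phi> \<longleftrightarrow> poly_matrix_map k \<phi> \<and>
     (\<exists>\<psi>. poly_matrix_map k \<psi> \<and> (\<forall>x. invertible x \<longrightarrow> invertible (\<phi> x) \<and> matrix_inv (\<phi> x) = \<psi> x))"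

lemma regular_map_translation:
  fixes g h :: "'a::field^'n^'n"
  assumes "invertible g" "invertible h"
  shows "regular_map 1 (\<lambda>x. g ** x ** h)"
  unfolding regular_map_def
proof (intro conjI exI allI impI)
  show "poly_matrix_map 1 (\<lambda>x. g ** x ** h)"
    using poly_matrix_map_mult[OF poly_matrix_map_mult[OF poly_matrix_map_const[of 0 g] poly_matrix_map_id]
        poly_matrix_map_const[of 0 h]] by simp
  show "poly_matrix_map 1 (\<lambda>x. matrix_inv h ** matrix_inv x ** matrix_inv g)"
    using poly_matrix_map_mult[OF poly_matrix_map_mult[OF poly_matrix_map_const[of 0 "matrix_inv h"]
        poly_matrix_map_matrix_inv] poly_matrix_map_const[of 0 "matrix_inv g"]] by simp
  fix x :: "'a^'n^'n" assume "invertible x"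
  then show "invertible (g ** x ** h)"
    and "matrix_inv (g ** x ** h) = matrix_inv h ** matrix_inv x ** matrix_inv g"
    using assms by (simp_all add: invertible_mult matrix_inv_mult matrix_mul_assoc)
qed

lemma regular_map_matrix_inv: "regular_map 1 (matrix_inv :: 'a::field^'n^'n \<Rightarrow> _)"
  unfolding regular_map_def
  using poly_matrix_map_matrix_inv poly_matrix_map_id invertible_matrix_inv matrix_inv_matrix_inv by blast

lemma regular_map_commutator_left:
  fixes b :: "'a::field^'n^'n"
  assumes "invertible b"
  shows "regular_map 2 (\<lambda>x. commutator x b)"
  unfolding regular_map_def
proof (intro conjI exI allI impI)
  show "poly_matrix_map 2 (\<lambda>x. commutator x b)"
    unfolding commutator_def
    using poly_matrix_map_mult[OF poly_matrix_map_mult[OF poly_matrix_map_mult[OF poly_matrix_map_id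
        poly_matrix_map_const[of 0 b]] poly_matrix_map_matrix_inv] poly_matrix_map_const[of 0 "matrix_inv b"]]
    by (simp add: numeral_2_eq_2)
  show "poly_matrix_map 2 (\<lambda>x. commutator b x)"
    unfolding commutator_def
    using poly_matrix_map_mult[OF poly_matrix_map_mult[OF poly_matrix_map_mult[OF poly_matrix_map_const[of 0 b]
        poly_matrix_map_id] poly_matrix_map_const[of 0 "matrix_inv b"]] poly_matrix_map_matrix_inv]
    by (simp add: numeral_2_eq_2)
  fix x :: "'a^'n^'n" assume "invertible x"
  then show "invertible (commutator x b)" "matrix_inv (commutator x b) = commutator b x"
    using assms by (simp_all add: invertible_commutator matrix_inv_commutator)
qed

lemma regular_map_commutator_right:
  fixes a :: "'a::field^'n^'n"
  assumes "invertible a"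
  shows "regular_map 2 (commutator a)"
  unfolding regular_map_def
proof (intro conjI exI allI impI)
  show "poly_matrix_map 2 (commutator a)"
    using poly_matrix_map_mult[OF poly_matrix_map_mult[OF poly_matrix_map_mult[OF poly_matrix_map_const[of 0 a]
        poly_matrix_map_id] poly_matrix_map_const[of 0 "matrix_inv a"]] poly_matrix_map_matrix_inv]
    by (simp add: commutator_def[abs_def] numeral_2_eq_2)
  show "poly_matrix_map 2 (\<lambda>x. commutator x a)"
    unfolding commutator_def
    using poly_matrix_map_mult[OF poly_matrix_map_mult[OF poly_matrix_map_mult[OF poly_matrix_map_id
        poly_matrix_map_const[of 0 a]] poly_matrix_map_matrix_inv] poly_matrix_map_const[of 0 "matrix_inv a"]]
    by (simp add: numeral_2_eq_2)
  fix x :: "'a^'n^'n" assume "invertible x"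
  then show "invertible (commutator a x)" "matrix_inv (commutator a x) = commutator x a"
    using assms by (simp_all add: invertible_commutator matrix_inv_commutator)
qed

lemma coord_comp_regular_map:
  assumes "regular_map k \<phi>"
  shows "\<exists>h \<in> poly_fun k. \<forall>x. invertible x \<longrightarrow> coord c (\<phi> x) = h x"
proof -
  obtain \<psi> where \<psi>: "poly_matrix_map k \<psi>" "\<And>x. invertible x \<Longrightarrow> matrix_inv (\<phi> x) = \<psi> x"
    and \<phi>: "poly_matrix_map k \<phi>"
    using assms unfolding regular_map_def by blast
  obtain i j b where c: "c = (i, j, b)" by (cases c) auto
  show ?thesis
  proof (cases b)
    case True
    then show ?thesis using \<psi> unfolding poly_matrix_map_def
      by (intro bexI[of _ "\<lambda>x. \<psi> x $ i $ j"]) (auto simp: c coord_def)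
  next
    case False
    then show ?thesis using \<phi> unfolding poly_matrix_map_def
      by (intro bexI[of _ "\<lambda>x. \<phi> x $ i $ j"]) (auto simp: c coord_def)
  qed
qed

lemma coord_monomial_comp_regular_map:
  assumes "regular_map k \<phi>"
  shows "\<exists>h \<in> poly_fun (k * length cs). \<forall>x. invertible x \<longrightarrow> coord_monomial cs (\<phi> x) = h x"
proof (induction cs)
  case Nil
  then show ?case by (intro bexI[of _ "\<lambda>x. 1"]) (auto simp: coord_monomial_Nil poly_fun_const)
next
  case (Cons c cs)
  then obtain h where h: "h \<in> poly_fun (k * length cs)"
    "\<forall>x. invertible x \<longrightarrow> coord_monomial cs (\<phi> x) = h x" by blast
  obtain h' where h': "h' \<in> poly_fun k" "\<forall>x. invertible x \<longrightarrow> coord c (\<phi> x) = h' x"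
    using coord_comp_regular_map[OF assms] by blast
  have "(\<lambda>x. h' x * h x) \<in> poly_fun (k + k * length cs)" by (rule poly_fun_mult[OF h'(1) h(1)])
  then show ?case
    using h h' by (intro bexI[of _ "\<lambda>x. h' x * h x"]) (auto simp: coord_monomial_def)
qed

lemma poly_fun_comp_regular_map:
  assumes \<phi>: "regular_map k \<phi>" and f: "f \<in> poly_fun D"
  shows "\<exists>h \<in> poly_fun (k * D). \<forall>x. invertible x \<longrightarrow> f (\<phi> x) = h x"
proof -
  let ?P = "{f. \<exists>h \<in> poly_fun (k * D). \<forall>x. invertible x \<longrightarrow> f (\<phi> x) = h x}"
  have "fun_space.subspace ?P"
  proof (rule fun_space.subspaceI)
    show "0 \<in> ?P" using poly_fun_zero[of "k * D"] by (force simp: zero_fun_def)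
  next
    fix f1 f2 assume "f1 \<in> ?P" "f2 \<in> ?P"
    then obtain h1 h2 where "h1 \<in> poly_fun (k * D)" "h2 \<in> poly_fun (k * D)"
      "\<forall>x. invertible x \<longrightarrow> f1 (\<phi> x) = h1 x" "\<forall>x. invertible x \<longrightarrow> f2 (\<phi> x) = h2 x" by blast
    then show "f1 + f2 \<in> ?P"
      by (intro CollectI bexI[of _ "\<lambda>x. h1 x + h2 x"]) (auto intro: poly_fun_add)
  next
    fix c f1 assume "f1 \<in> ?P"
    then obtain h1 where "h1 \<in> poly_fun (k * D)" "\<forall>x. invertible x \<longrightarrow> f1 (\<phi> x) = h1 x" by blast
    then show "(\<lambda>x. c * f1 x) \<in> ?P"
      by (intro CollectI bexI[of _ "\<lambda>x. c * h1 x"]) (auto intro: poly_fun_scale)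
  qed
  moreover have "coord_monomial cs \<in> ?P" if "length cs \<le> D" for cs
    using coord_monomial_comp_regular_map[OF \<phi>, of cs] poly_fun_mono[of "k * length cs" "k * D"] that
    by auto
  ultimately show ?thesis using poly_fun_span_induct[OF f] by blast
qed

section \<open>Closures of bounded degree\<close>

definition zariski_closure :: "nat \<Rightarrow> ('a::field^'n^'n) set \<Rightarrow> ('a^'n^'n) set" where
  "zariski_closure D S = {x. invertible x \<and> (\<forall>f \<in> poly_fun D. (\<forall>s \<in> S. f s = 0) \<longrightarrow> f x = 0)}"

lemma zariski_closure_invertible: "x \<in> zariski_closure D S \<Longrightarrow> invertible x"
  by (simp add: zariski_closure_def)

lemma zariski_closure_superset: "S \<subseteq> Collect invertible \<Longrightarrow> S \<subseteq> zariski_closure D S"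
  unfolding zariski_closure_def by blast

lemma zariski_closure_antimono: "D \<le> D' \<Longrightarrow> zariski_closure D' S \<subseteq> zariski_closure D S"
  unfolding zariski_closure_def using poly_fun_mono by blast

lemma zariski_closure_minimal: "S \<subseteq> zariski_closure D T \<Longrightarrow> zariski_closure D S \<subseteq> zariski_closure D T"
  unfolding zariski_closure_def by blast

lemma zariski_closure_regular_map:
  assumes \<phi>: "regular_map k \<phi>" and S: "S \<subseteq> Collect invertible" "\<phi> ` S \<subseteq> zariski_closure D T"
    and x: "x \<in> zariski_closure (k * D) S"
  shows "\<phi> x \<in> zariski_closure D T"
proof -
  have x_inv: "invertible x" using x by (rule zariski_closure_invertible)
  have "f (\<phi> x) = 0" if f: "f \<in> poly_fun D" "\<forall>t \<in> T. f t = 0" for f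
  proof -
    obtain h where h: "h \<in> poly_fun (k * D)" "\<forall>x. invertible x \<longrightarrow> f (\<phi> x) = h x"
      using poly_fun_comp_regular_map[OF \<phi> f(1)] by blast
    have "\<forall>s \<in> S. h s = 0" using S f h(2) unfolding zariski_closure_def by fastforce
    then have "h x = 0" using x h(1) unfolding zariski_closure_def by blast
    then show ?thesis using h(2) x_inv by simp
  qed
  moreover have "invertible (\<phi> x)" using \<phi> x_inv unfolding regular_map_def by blast
  ultimately show ?thesis unfolding zariski_closure_def by blast
qed

lemma zariski_closure_mat_1: "0 < D \<Longrightarrow> zariski_closure D {mat 1 :: 'a::field^'n^'n} = {mat 1}"
proof (intro equalityI subsetI)
  fix x :: "'a^'n^'n" assume D: "0 < D" and x: "x \<in> zariski_closure D {mat 1}"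
  have "x $ i $ j = mat 1 $ i $ j" for i j
  proof -
    have "(\<lambda>y::'a^'n^'n. y $ i $ j) \<in> poly_fun 1" using poly_matrix_map_id unfolding poly_matrix_map_def by blast
    then have "(\<lambda>y::'a^'n^'n. y $ i $ j - (mat 1 :: 'a^'n^'n) $ i $ j) \<in> poly_fun D"
      using poly_fun_mono[of 1 D] D by (auto intro: poly_fun_diff poly_fun_const)
    then show ?thesis using x unfolding zariski_closure_def by auto
  qed
  then show "x \<in> {mat 1}" by (simp add: vec_eq_iff)
qed (auto simp: zariski_closure_def invertible_mat_1)

lemma subgroup_zariski_closure:
  assumes S: "subgroup S (GL :: ('a::field^'n^'n) monoid)"
  shows "subgroup (zariski_closure D S) GL"
proof -
  have S_inv: "S \<subseteq> Collect invertible" using subgroup_GL_invertible[OF S] .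
  then have S_cl: "S \<subseteq> zariski_closure D S" by (rule zariski_closure_superset)
  show ?thesis
  proof (rule group.subgroupI[OF group_GL])
    show "zariski_closure D S \<subseteq> carrier GL" by (auto simp: zariski_closure_def)
    show "zariski_closure D S \<noteq> {}" using S_cl subgroup_GL_one[OF S] by blast
  next
    fix a assume a: "a \<in> zariski_closure D S"
    have "matrix_inv ` S \<subseteq> zariski_closure D S" using subgroup_GL_matrix_inv[OF S] S_cl by auto
    moreover have "a \<in> zariski_closure (1 * D) S" using a by simp
    ultimately have "matrix_inv a \<in> zariski_closure D S"
      by (rule zariski_closure_regular_map[OF regular_map_matrix_inv S_inv])
    then show "inv\<^bsub>GL\<^esub> a \<in> zariski_closure D S"
      using GL_inv zariski_closure_invertible[OF a] by metis
  next
    fix a b assume a: "a \<in> zariski_closure D S" and b: "b \<in> zariski_closure D S"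
    have a': "a \<in> zariski_closure (1 * D) S" and b': "b \<in> zariski_closure (1 * D) S"
      using a b by simp_all
    have "s ** b \<in> zariski_closure D S" if s: "s \<in> S" for s
    proof -
      have "(\<lambda>x. s ** x ** mat 1) ` S \<subseteq> zariski_closure D S"
        using subgroup_GL_mult[OF S s] S_cl by auto
      moreover have "invertible s" using s S_inv by blast
      ultimately show ?thesis
        using zariski_closure_regular_map[OF regular_map_translation[of s "mat 1"] S_inv _ b']
          invertible_mat_1 by simp
    qed
    then have "(\<lambda>x. mat 1 ** x ** b) ` S \<subseteq> zariski_closure D S" by auto
    then have "mat 1 ** a ** b \<in> zariski_closure D S"
      using zariski_closure_regular_map[OF regular_map_translation[of "mat 1" b] S_inv _ a']
        zariski_closure_invertible[OF b] invertible_mat_1 by simp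
    then show "a \<otimes>\<^bsub>GL\<^esub> b \<in> zariski_closure D S" by simp
  qed
qed

lemma zariski_closed_regular_map_preimage:
  assumes "regular_map 1 \<phi>"
  shows "zariski_closure D {x. invertible x \<and> \<phi> x \<in> zariski_closure D T}
    \<subseteq> {x. invertible x \<and> \<phi> x \<in> zariski_closure D T}"
proof
  let ?S = "{x. invertible x \<and> \<phi> x \<in> zariski_closure D T}"
  fix x assume x: "x \<in> zariski_closure D ?S"
  have "?S \<subseteq> Collect invertible" "\<phi> ` ?S \<subseteq> zariski_closure D T" by auto
  moreover have "x \<in> zariski_closure (1 * D) ?S" using x by simp
  ultimately have "\<phi> x \<in> zariski_closure D T" by (rule zariski_closure_regular_map[OF assms])
  with zariski_closure_invertible[OF x] show "x \<in> ?S" by simp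
qed

text \<open>Commutators have degree 2 in each argument: this is where the degree doubles.\<close>
lemma commutator_zariski_closure:
  fixes A B :: "('a::field^'n^'n) set"
  assumes A: "A \<subseteq> Collect invertible" and B: "B \<subseteq> Collect invertible"
    and a: "a \<in> zariski_closure (2 * D) A" and b: "b \<in> zariski_closure (2 * D) B"
  shows "commutator a b \<in> zariski_closure D {commutator x y | x y. x \<in> A \<and> y \<in> B}"
proof -
  let ?C = "{commutator x y | x y. x \<in> A \<and> y \<in> B}"
  have C: "?C \<subseteq> zariski_closure D ?C"
    using A B invertible_commutator by (intro zariski_closure_superset) blast
  have "commutator a y \<in> zariski_closure D ?C" if y: "y \<in> B" for y
  proof -
    have "invertible y" using y B by blast
    moreover have "(\<lambda>x. commutator x y) ` A \<subseteq> zariski_closure D ?C" using y C by blast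
    ultimately show ?thesis using zariski_closure_regular_map[OF regular_map_commutator_left A _ a] by simp
  qed
  then have "commutator a ` B \<subseteq> zariski_closure D ?C" by blast
  then show ?thesis
    using zariski_closure_regular_map[OF regular_map_commutator_right[OF zariski_closure_invertible[OF a]] B _ b]
    by simp
qed

text \<open>
  The closed sets of degree D satisfy the descending chain condition, since their vanishing
  ideals live in the finite dimensional space of polynomials of degree at most D.
\<close>
lemma zariski_closed_Inter_finite:
  fixes A :: "'i \<Rightarrow> ('a::field^'n^'n) set"
  assumes closed: "\<And>i. i \<in> I \<Longrightarrow> zariski_closure D (A i) \<subseteq> A i"
  shows "\<exists>F. finite F \<and> F \<subseteq> I \<and> (\<forall>x. invertible x \<and> (\<forall>j \<in> F. x \<in> A j) \<longrightarrow> (\<forall>i \<in> I. x \<in> A i))"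
proof -
  define X where "X F = {x. invertible x \<and> (\<forall>i \<in> F. x \<in> A i)}" for F
  define J where "J F = {f \<in> poly_fun D. \<forall>x \<in> X F. f x = 0}" for F
  have J_subspace: "fun_space.subspace (J F)" for F
    using poly_fun_subspace unfolding J_def fun_space.subspace_def by (auto simp: distrib_left)
  have J_span: "J F \<subseteq> fun_space.span (coord_monomials D)" for F
    unfolding J_def poly_fun_def by blast
  define dims where "dims = {fun_space.dim (J F) | F. finite F \<and> F \<subseteq> I}"
  have "dims \<subseteq> {..card (coord_monomials D :: ('a^'n^'n \<Rightarrow> 'a) set)}"
    using fun_space.dim_le_card[OF J_span finite_coord_monomials] unfolding dims_def by auto
  then have "finite dims" by (rule finite_subset) simp
  moreover have "dims \<noteq> {}" unfolding dims_def by blast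
  ultimately have "Max dims \<in> dims" by (rule Max_in)
  then obtain F where F: "finite F" "F \<subseteq> I" "fun_space.dim (J F) = Max dims"
    unfolding dims_def by auto
  have "x \<in> A i" if x: "invertible x" "\<forall>j \<in> F. x \<in> A j" and i: "i \<in> I" for x i
  proof -
    have "J F \<subseteq> J (insert i F)" unfolding J_def X_def by blast
    moreover have "fun_space.dim (J (insert i F)) \<le> fun_space.dim (J F)"
      using F i \<open>finite dims\<close> by (auto simp: dims_def intro!: Max_ge)
    ultimately have J_eq: "J (insert i F) = J F"
      using fun_space.subspace_eq_if_dim_le[OF J_subspace J_subspace _ J_span finite_coord_monomials]
      by blast
    have "f x = 0" if "f \<in> poly_fun D" "\<forall>s \<in> A i. f s = 0" for f
    proof -
      have "f \<in> J (insert i F)" using that unfolding J_def X_def by blast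
      then show ?thesis using J_eq x unfolding J_def X_def by blast
    qed
    then have "x \<in> zariski_closure D (A i)" using x(1) unfolding zariski_closure_def by blast
    then show ?thesis using closed[OF i] by blast
  qed
  with F show ?thesis by blast
qed

section \<open>Derived and lower central series\<close>

lemma derived_zariski_closure:
  assumes Y: "subgroup Y (GL :: ('a::field^'n^'n) monoid)"
  shows "derived GL (zariski_closure (2 * D) Y) \<subseteq> zariski_closure D (derived GL Y)"
  unfolding derived_def[of GL "zariski_closure (2 * D) Y"]
proof (rule group.generate_subgroup_incl[OF group_GL])
  have Y_inv: "Y \<subseteq> Collect invertible" using subgroup_GL_invertible[OF Y] .
  have derived_Y: "subgroup (derived GL Y) GL"
    using group.derived_is_subgroup[OF group_GL subgroup.subset[OF Y]] .
  show "subgroup (zariski_closure D (derived GL Y)) GL"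
    by (rule subgroup_zariski_closure[OF derived_Y])
  have "{commutator x y | x y. x \<in> Y \<and> y \<in> Y} \<subseteq> derived_set GL Y"
  proof (intro subsetI, elim CollectE exE conjE)
    fix z x y assume "z = commutator x y" "x \<in> Y" "y \<in> Y"
    then show "z \<in> derived_set GL Y" using commutator_GL[of x y] Y_inv by blast
  qed
  also have "\<dots> \<subseteq> derived GL Y" unfolding derived_def by (blast intro: generate.incl)
  also have "\<dots> \<subseteq> zariski_closure D (derived GL Y)"
    by (rule zariski_closure_superset[OF subgroup_GL_invertible[OF derived_Y]])
  finally have commutators:
    "zariski_closure D {commutator x y | x y. x \<in> Y \<and> y \<in> Y} \<subseteq> zariski_closure D (derived GL Y)"
    by (rule zariski_closure_minimal)
  show "derived_set GL (zariski_closure (2 * D) Y) \<subseteq> zariski_closure D (derived GL Y)"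
  proof
    fix z assume "z \<in> derived_set GL (zariski_closure (2 * D) Y)"
    then obtain a b where ab: "a \<in> zariski_closure (2 * D) Y" "b \<in> zariski_closure (2 * D) Y"
      and z: "z = a \<otimes>\<^bsub>GL\<^esub> b \<otimes>\<^bsub>GL\<^esub> inv\<^bsub>GL\<^esub> a \<otimes>\<^bsub>GL\<^esub> inv\<^bsub>GL\<^esub> b" by blast
    then have "z = commutator a b" using zariski_closure_invertible commutator_GL by blast
    moreover have "commutator a b \<in> zariski_closure D (derived GL Y)"
      using commutators commutator_zariski_closure[OF Y_inv Y_inv ab] by (rule subsetD)
    ultimately show "z \<in> zariski_closure D (derived GL Y)" by simp
  qed
qed

lemma derived_iter_zariski_closure:
  assumes H: "subgroup H (GL :: ('a::field^'n^'n) monoid)"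
  shows "(derived GL ^^ m) (zariski_closure (2 ^ m * D) H) \<subseteq> zariski_closure D ((derived GL ^^ m) H)"
proof (induction m arbitrary: D)
  case 0
  then show ?case by simp
next
  case (Suc m)
  have "(derived GL ^^ Suc m) (zariski_closure (2 ^ Suc m * D) H)
      = derived GL ((derived GL ^^ m) (zariski_closure (2 ^ m * (2 * D)) H))"
    by (simp add: mult.assoc mult.left_commute)
  also have "\<dots> \<subseteq> derived GL (zariski_closure (2 * D) ((derived GL ^^ m) H))"
    by (rule group.mono_derived[OF group_GL Suc.IH])
  also have "\<dots> \<subseteq> zariski_closure D ((derived GL ^^ Suc m) H)"
    using derived_zariski_closure[OF group.exp_of_derived_is_subgroup[OF group_GL H]] by simp
  finally show ?case .
qed

lemma derived_iter_subgroup_GL: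
  assumes X: "subgroup X (GL :: ('a::field^'n^'n) monoid)"
  shows "(derived (GL\<lparr>carrier := X\<rparr>) ^^ n) X = (derived GL ^^ n) X"
proof (induction n)
  case (Suc n)
  have "(derived GL ^^ n) X \<subseteq> X"
    using group.derived_incl[OF group_GL] X by (induction n) auto
  then show ?case using group.derived_consistent[OF group_GL _ X] Suc by simp
qed simp

lemma solvable_subgroup_GL_iff:
  assumes X: "subgroup X (GL :: ('a::field^'n^'n) monoid)"
  shows "solvable (GL\<lparr>carrier := X\<rparr>) \<longleftrightarrow> (\<exists>n. (derived GL ^^ n) X \<subseteq> {mat 1})"
proof -
  have "mat 1 \<in> (derived GL ^^ n) X" for n
    using subgroup_GL_one[OF group.exp_of_derived_is_subgroup[OF group_GL X]] .
  then have "(derived GL ^^ n) X = {mat 1} \<longleftrightarrow> (derived GL ^^ n) X \<subseteq> {mat 1}" for n by blast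
  then show ?thesis
    using group.solvable_iff_trivial_derived_seq[OF group.subgroup_imp_group[OF group_GL X]]
    by (simp add: derived_iter_subgroup_GL[OF X])
qed

fun GL_lower_central :: "('a::field^'n^'n) set \<Rightarrow> nat \<Rightarrow> ('a^'n^'n) set" where
  "GL_lower_central X 0 = X"
| "GL_lower_central X (Suc k) = generate GL (\<Union>x \<in> X. \<Union>y \<in> GL_lower_central X k. {commutator x y})"

lemma GL_lower_central_subgroup:
  assumes X: "subgroup X (GL :: ('a::field^'n^'n) monoid)"
  shows "subgroup (GL_lower_central X k) GL \<and> GL_lower_central X k \<subseteq> X"
proof (induction k)
  case 0
  then show ?case using X by simp
next
  case (Suc k)
  have S: "(\<Union>x \<in> X. \<Union>y \<in> GL_lower_central X k. {commutator x y}) \<subseteq> X"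
    using Suc subgroup_GL_commutator[OF X] by blast
  have "subgroup (GL_lower_central X (Suc k)) GL"
    unfolding GL_lower_central.simps
    by (rule group.generate_is_subgroup[OF group_GL]) (use S subgroup.subset[OF X] in blast)
  then show ?case using group.generate_subgroup_incl[OF group_GL S X] by simp
qed

lemma lower_central_subgroup_GL:
  assumes X: "subgroup X (GL :: ('a::field^'n^'n) monoid)"
  shows "lower_central (GL\<lparr>carrier := X\<rparr>) k = GL_lower_central X k"
proof (induction k)
  case (Suc k)
  have L: "GL_lower_central X k \<subseteq> X" using GL_lower_central_subgroup[OF X] by blast
  have inv: "inv\<^bsub>GL\<lparr>carrier := X\<rparr>\<^esub> x = matrix_inv x" if "x \<in> X" for x
    using subgroup_GL_inv_eq[OF X that] .
  have S: "(\<Union>x \<in> X. \<Union>y \<in> GL_lower_central X k. {commutator x y}) \<subseteq> X"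
    using L subgroup_GL_commutator[OF X] by blast
  have "(\<Union>x \<in> X. \<Union>y \<in> GL_lower_central X k.
          {x \<otimes>\<^bsub>GL\<lparr>carrier := X\<rparr>\<^esub> y \<otimes>\<^bsub>GL\<lparr>carrier := X\<rparr>\<^esub> inv\<^bsub>GL\<lparr>carrier := X\<rparr>\<^esub> x
             \<otimes>\<^bsub>GL\<lparr>carrier := X\<rparr>\<^esub> inv\<^bsub>GL\<lparr>carrier := X\<rparr>\<^esub> y})
      = (\<Union>x \<in> X. \<Union>y \<in> GL_lower_central X k. {commutator x y})"
    using L by (auto simp: commutator_def inv subset_iff)
  then show ?case
    using Suc group.generate_consistent[OF group_GL S X] by simp
qed simp

lemma nilpotent_subgroup_GL_iff:
  assumes X: "subgroup X (GL :: ('a::field^'n^'n) monoid)"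
  shows "nilpotent_group (GL\<lparr>carrier := X\<rparr>) \<longleftrightarrow> (\<exists>k. GL_lower_central X k \<subseteq> {mat 1})"
proof -
  have "mat 1 \<in> GL_lower_central X k" for k
    using subgroup_GL_one GL_lower_central_subgroup[OF X] by blast
  then have "GL_lower_central X k = {mat 1} \<longleftrightarrow> GL_lower_central X k \<subseteq> {mat 1}" for k by blast
  then show ?thesis
    using group.subgroup_imp_group[OF group_GL X] lower_central_subgroup_GL[OF X]
    by (simp add: nilpotent_group_def)
qed

lemma GL_lower_central_mono: "N \<subseteq> C \<Longrightarrow> GL_lower_central N k \<subseteq> GL_lower_central C k"
proof (induction k)
  case (Suc k)
  then have "(\<Union>x \<in> N. \<Union>y \<in> GL_lower_central N k. {commutator x y})
      \<subseteq> (\<Union>x \<in> C. \<Union>y \<in> GL_lower_central C k. {commutator x y})" by blast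
  then show ?case using group.mono_generate[OF group_GL] by simp
qed simp

lemma GL_lower_central_zariski_closure:
  assumes H: "subgroup H (GL :: ('a::field^'n^'n) monoid)"
  shows "GL_lower_central (zariski_closure (2 ^ m * D) H) m \<subseteq> zariski_closure D (GL_lower_central H m)"
proof (induction m arbitrary: D)
  case 0
  then show ?case by simp
next
  case (Suc m)
  let ?C = "zariski_closure (2 ^ Suc m * D) H"
  have IH: "GL_lower_central ?C m \<subseteq> zariski_closure (2 * D) (GL_lower_central H m)"
    using Suc.IH[of "2 * D"] by (simp add: mult.assoc mult.left_commute)
  have H_inv: "H \<subseteq> Collect invertible" using subgroup_GL_invertible[OF H] .
  have L: "subgroup (GL_lower_central H m) GL" "subgroup (GL_lower_central H (Suc m)) GL"
    using GL_lower_central_subgroup[OF H] by blast+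
  have C: "?C \<subseteq> zariski_closure (2 * D) H" by (rule zariski_closure_antimono) simp
  have "{commutator x y | x y. x \<in> H \<and> y \<in> GL_lower_central H m} \<subseteq> GL_lower_central H (Suc m)"
    by (auto intro: generate.incl)
  also have "\<dots> \<subseteq> zariski_closure D (GL_lower_central H (Suc m))"
    by (rule zariski_closure_superset[OF subgroup_GL_invertible[OF L(2)]])
  finally have commutators: "zariski_closure D {commutator x y | x y. x \<in> H \<and> y \<in> GL_lower_central H m}
      \<subseteq> zariski_closure D (GL_lower_central H (Suc m))"
    by (rule zariski_closure_minimal)
  have "(\<Union>x \<in> ?C. \<Union>y \<in> GL_lower_central ?C m. {commutator x y})
      \<subseteq> zariski_closure D (GL_lower_central H (Suc m))"
  proof (intro subsetI, elim UN_E)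
    fix z x y assume "x \<in> ?C" "y \<in> GL_lower_central ?C m" "z \<in> {commutator x y}"
    then show "z \<in> zariski_closure D (GL_lower_central H (Suc m))"
      using commutator_zariski_closure[OF H_inv subgroup_GL_invertible[OF L(1)]] C IH commutators
      by blast
  qed
  then show ?case
    using group.generate_subgroup_incl[OF group_GL _ subgroup_zariski_closure[OF L(2)]] by simp
qed

section \<open>The open normal subgroup\<close>

lemma open_normal_subgroup_in_zariski_closure:
  fixes G H :: "('a::field^'n^'n) set"
  assumes G: "subgroup G GL" and T: "topological_group_on T (GL\<lparr>carrier := G\<rparr>)"
    and H: "subgroup H (GL\<lparr>carrier := G\<rparr>)" "openin T H"
  obtains N where "N \<lhd> GL\<lparr>carrier := G\<rparr>" "openin T N" "N \<subseteq> zariski_closure D H"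
proof -
  let ?G = "GL\<lparr>carrier := G\<rparr>"
  interpret G: group ?G by (rule group.subgroup_imp_group[OF group_GL G])
  have H_GL: "subgroup H GL" by (rule group.incl_subgroup[OF group_GL G H(1)])
  have inv: "inv\<^bsub>?G\<^esub> g = matrix_inv g" if "g \<in> G" for g
    by (rule subgroup_GL_inv_eq[OF G that])
  have G_inv: "G \<subseteq> Collect invertible" by (rule subgroup_GL_invertible[OF G])
  define C where "C = zariski_closure D H"
  have H_C: "H \<subseteq> C" unfolding C_def by (rule zariski_closure_superset[OF subgroup_GL_invertible[OF H_GL]])
  have "subgroup (C \<inter> G) GL"
    using group.subgroups_Inter_pair[OF group_GL subgroup_zariski_closure[OF H_GL] G] by (simp add: C_def)
  then have CG: "subgroup (C \<inter> G) ?G" by (rule group.subgroup_incl[OF group_GL _ G]) blast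
  define N where "N = normal_core ?G (C \<inter> G)"
  have N_normal: "N \<lhd> ?G" unfolding N_def by (rule G.normal_core_normal[OF CG])
  have N_C: "N \<subseteq> C" unfolding N_def using G.normal_core_subset by blast
  define A where "A g = {x. invertible x \<and> matrix_inv g ** x ** g \<in> C}" for g :: "'a^'n^'n"
  have A_closed: "zariski_closure D (A g) \<subseteq> A g" if "g \<in> G" for g
  proof -
    have "invertible g" using that G_inv by blast
    then have "regular_map 1 (\<lambda>x. matrix_inv g ** x ** g)"
      by (intro regular_map_translation invertible_matrix_inv)
    then show ?thesis unfolding A_def C_def by (rule zariski_closed_regular_map_preimage)
  qed
  obtain F where F: "finite F" "F \<subseteq> G"
    and A_F: "\<forall>x. invertible x \<and> (\<forall>j \<in> F. x \<in> A j) \<longrightarrow> (\<forall>g \<in> G. x \<in> A g)"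
    using zariski_closed_Inter_finite[where I = G and A = A, OF A_closed] by blast
  define U where "U = {x \<in> carrier ?G. \<forall>g \<in> F. inv\<^bsub>?G\<^esub> g \<otimes>\<^bsub>?G\<^esub> x \<otimes>\<^bsub>?G\<^esub> g \<in> H}"
  have "openin T U"
    unfolding U_def using topological_group_on_openin_conjugates_Inter[OF T H(2) F(1)] F(2) by simp
  moreover have "\<one>\<^bsub>?G\<^esub> \<in> U"
    using F(2) G_inv subgroup.one_closed[OF H(1)] subgroup_GL_one[OF G]
    by (auto simp: U_def inv matrix_inv_cancel subset_iff)
  moreover have "U \<subseteq> N"
  proof
    fix x assume x: "x \<in> U"
    then have "x \<in> G" "invertible x" using G_inv by (auto simp: U_def)
    moreover have "\<forall>g \<in> F. x \<in> A g" using x F(2) H_C \<open>invertible x\<close> by (auto simp: U_def A_def inv subset_iff)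
    ultimately have "\<forall>g \<in> G. x \<in> A g" using A_F by blast
    then show "x \<in> N" using \<open>x \<in> G\<close>
      by (auto simp: N_def normal_core_def A_def inv subgroup_GL_mult[OF G] subgroup_GL_matrix_inv[OF G])
  qed
  ultimately have "openin T N"
    using topological_group_on_openin_subgroup[OF T normal_imp_subgroup[OF N_normal]] by blast
  with N_normal N_C that show thesis by (simp add: C_def)
qed

lemma open_normal_solvable_subgroup:
  fixes G H :: "('a::field^'n^'n) set"
  assumes G: "subgroup G GL" and T: "topological_group_on T (GL\<lparr>carrier := G\<rparr>)"
    and H: "subgroup H (GL\<lparr>carrier := G\<rparr>)" "openin T H" "solvable (GL\<lparr>carrier := H\<rparr>)"
  obtains N where "N \<lhd> GL\<lparr>carrier := G\<rparr>" "openin T N" "solvable (GL\<lparr>carrier := N\<rparr>)"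
proof -
  have H_GL: "subgroup H GL" by (rule group.incl_subgroup[OF group_GL G H(1)])
  obtain n where n: "(derived GL ^^ n) H \<subseteq> {mat 1}" using H(3) solvable_subgroup_GL_iff[OF H_GL] by blast
  obtain N where N: "N \<lhd> GL\<lparr>carrier := G\<rparr>" "openin T N" "N \<subseteq> zariski_closure (2 ^ n * 1) H"
    using open_normal_subgroup_in_zariski_closure[OF G T H(1,2)] .
  have "(derived GL ^^ n) N \<subseteq> (derived GL ^^ n) (zariski_closure (2 ^ n * 1) H)"
    by (rule group.mono_exp_of_derived[OF group_GL N(3)])
  also have "\<dots> \<subseteq> zariski_closure 1 ((derived GL ^^ n) H)"
    by (rule derived_iter_zariski_closure[OF H_GL])
  also have "\<dots> \<subseteq> {mat 1}"
    using zariski_closure_minimal[of _ 1 "{mat 1}"] n zariski_closure_mat_1[of 1] by auto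
  finally have "solvable (GL\<lparr>carrier := N\<rparr>)"
    using solvable_subgroup_GL_iff[OF group.incl_subgroup[OF group_GL G normal_imp_subgroup[OF N(1)]]]
    by blast
  with N that show thesis by blast
qed

lemma open_normal_nilpotent_subgroup:
  fixes G H :: "('a::field^'n^'n) set"
  assumes G: "subgroup G GL" and T: "topological_group_on T (GL\<lparr>carrier := G\<rparr>)"
    and H: "subgroup H (GL\<lparr>carrier := G\<rparr>)" "openin T H" "nilpotent_group (GL\<lparr>carrier := H\<rparr>)"
  obtains N where "N \<lhd> GL\<lparr>carrier := G\<rparr>" "openin T N" "nilpotent_group (GL\<lparr>carrier := N\<rparr>)"
proof -
  have H_GL: "subgroup H GL" by (rule group.incl_subgroup[OF group_GL G H(1)])
  obtain k where k: "GL_lower_central H k \<subseteq> {mat 1}" using H(3) nilpotent_subgroup_GL_iff[OF H_GL] by blast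
  obtain N where N: "N \<lhd> GL\<lparr>carrier := G\<rparr>" "openin T N" "N \<subseteq> zariski_closure (2 ^ k * 1) H"
    using open_normal_subgroup_in_zariski_closure[OF G T H(1,2)] .
  have "GL_lower_central N k \<subseteq> GL_lower_central (zariski_closure (2 ^ k * 1) H) k"
    by (rule GL_lower_central_mono[OF N(3)])
  also have "\<dots> \<subseteq> zariski_closure 1 (GL_lower_central H k)"
    by (rule GL_lower_central_zariski_closure[OF H_GL])
  also have "\<dots> \<subseteq> {mat 1}"
    using zariski_closure_minimal[of _ 1 "{mat 1}"] k zariski_closure_mat_1[of 1] by auto
  finally have "nilpotent_group (GL\<lparr>carrier := N\<rparr>)"
    using nilpotent_subgroup_GL_iff[OF group.incl_subgroup[OF group_GL G normal_imp_subgroup[OF N(1)]]]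
    by blast
  with N that show thesis by blast
qed

theorem lemma1p4:
  fixes G :: "('a::field ^ 'n ^ 'n) set" and T :: "('a ^ 'n ^ 'n) topology"
  assumes "infinite (UNIV :: 'a set)"
    and "subgroup G GL"
    and "topological_group_on T (GL\<lparr>carrier := G\<rparr>)"
  shows "((\<exists>H. subgroup H (GL\<lparr>carrier := G\<rparr>) \<and> openin T H \<and> solvable (GL\<lparr>carrier := H\<rparr>))
           \<longrightarrow> (\<exists>N. N \<lhd> GL\<lparr>carrier := G\<rparr> \<and> openin T N \<and> solvable (GL\<lparr>carrier := N\<rparr>)))
       \<and> ((\<exists>H. subgroup H (GL\<lparr>carrier := G\<rparr>) \<and> openin T H \<and> nilpotent_group (GL\<lparr>carrier := H\<rparr>))
           \<longrightarrow> (\<exists>N. N \<lhd> GL\<lparr>carrier := G\<rparr> \<and> openin T N \<and> nilpotent_group (GL\<lparr>carrier := N\<rparr>)))"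
proof (intro conjI impI)
  assume "\<exists>H. subgroup H (GL\<lparr>carrier := G\<rparr>) \<and> openin T H \<and> solvable (GL\<lparr>carrier := H\<rparr>)"
  then obtain H where "subgroup H (GL\<lparr>carrier := G\<rparr>)" "openin T H" "solvable (GL\<lparr>carrier := H\<rparr>)"
    by blast
  from open_normal_solvable_subgroup[OF assms(2,3) this]
  show "\<exists>N. N \<lhd> GL\<lparr>carrier := G\<rparr> \<and> openin T N \<and> solvable (GL\<lparr>carrier := N\<rparr>)"
    by blast
next
  assume "\<exists>H. subgroup H (GL\<lparr>carrier := G\<rparr>) \<and> openin T H \<and> nilpotent_group (GL\<lparr>carrier := H\<rparr>)"
  then obtain H where "subgroup H (GL\<lparr>carrier := G\<rparr>)" "openin T H" "nilpotent_group (GL\<lparr>carrier := H\<rparr>)"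
    by blast
  from open_normal_nilpotent_subgroup[OF assms(2,3) this]
  show "\<exists>N. N \<lhd> GL\<lparr>carrier := G\<rparr> \<and> openin T N \<and> nilpotent_group (GL\<lparr>carrier := N\<rparr>)"
    by blast
qed

end
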